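(* Let $\mathcal{A}\in\mathbb{C}^{n\times n\times n\times n}$ be a CPS tensor that is also symmetric. Then $\mathcal{A}(x,x,\bar x,\bar x)=\sum_{i,j,k,l}\mathcal{A}_{ijkl}x_ix_j\bar x_k\bar x_l\ge0$ for all $x\in\mathbb{C}^n$ if and only if $\langle X,\mathcal{A}X\rangle\ge0$ for all Hermitian positive semidefinite $X\in\mathbb{C}^{n\times n}$.
   Context: A tensor $\mathcal{A}\in\mathbb{C}^{n\times n\times n\times n}$ is conjugate partial-symmetric (CPS) if $\mathcal{A}_{ijkl}=\overline{\mathcal{A}_{klij}}$ and $\mathcal{A}_{ijkl}=\mathcal{A}_{jikl}=\mathcal{A}_{ijlk}$ for all indices; it is symmetric if its entries are invariant under all permutations of the four indices. For $X\in\mathbb{C}^{n\times n}$, $\langle X,\mathcal{A}X\rangle=\sum_{i,j,k,l}\mathcal{A}_{ijkl}X_{kl}\overline{X_{ij}}$. *)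

theory Defs
  imports "HOL-Analysis.Analysis" "HOL-Library.Complex_Order"
begin

text \<open>Fourth-order tensors of dimension n are represented as functions
  nat => nat => nat => nat => complex, with indices ranging over {..<n}.
  Vectors are nat => complex, matrices nat => nat => complex.\<close>

definition CPS_tensor :: "nat \<Rightarrow> (nat \<Rightarrow> nat \<Rightarrow> nat \<Rightarrow> nat \<Rightarrow> complex) \<Rightarrow> bool" where
  "CPS_tensor n A \<longleftrightarrow> (\<forall>i<n. \<forall>j<n. \<forall>k<n. \<forall>l<n.
      A i j k l = cnj (A k l i j) \<and> A i j k l = A j i k l \<and> A i j k l = A i j l k)"

definition symmetric_tensor :: "nat \<Rightarrow> (nat \<Rightarrow> nat \<Rightarrow> nat \<Rightarrow> nat \<Rightarrow> complex) \<Rightarrow> bool" where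
  "symmetric_tensor n A \<longleftrightarrow> (\<forall>i<n. \<forall>j<n. \<forall>k<n. \<forall>l<n.
      A i j k l = A j i k l \<and> A i j k l = A j k i l \<and> A i j k l = A i j l k
      \<and> A i j k l = A l j k i \<and> A i j k l = A k j i l \<and> A i j k l = A i k j l
      \<and> A i j k l = A i l k j)"

definition tensor_form :: "nat \<Rightarrow> (nat \<Rightarrow> nat \<Rightarrow> nat \<Rightarrow> nat \<Rightarrow> complex) \<Rightarrow> (nat \<Rightarrow> complex) \<Rightarrow> complex" where
  "tensor_form n A x = (\<Sum>i<n. \<Sum>j<n. \<Sum>k<n. \<Sum>l<n. A i j k l * x i * x j * cnj (x k) * cnj (x l))"

definition tensor_matrix_inner :: "nat \<Rightarrow> (nat \<Rightarrow> nat \<Rightarrow> complex) \<Rightarrow> (nat \<Rightarrow> nat \<Rightarrow> nat \<Rightarrow> nat \<Rightarrow> complex) \<Rightarrow> complex" where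
  "tensor_matrix_inner n X A = (\<Sum>i<n. \<Sum>j<n. \<Sum>k<n. \<Sum>l<n. A i j k l * X k l * cnj (X i j))"

definition hermitian_psd :: "nat \<Rightarrow> (nat \<Rightarrow> nat \<Rightarrow> complex) \<Rightarrow> bool" where
  "hermitian_psd n X \<longleftrightarrow> (\<forall>i<n. \<forall>j<n. X i j = cnj (X j i)) \<and>
     (\<forall>v :: nat \<Rightarrow> complex. (\<Sum>i<n. \<Sum>j<n. cnj (v i) * X i j * v j) \<ge> 0)"

end

theory Submission
  imports Defs
begin

text \<open>Every Hermitian positive semidefinite matrix is a Gram matrix \<open>X = \<Sum>\<^sub>r v\<^sub>r v\<^sub>r\<^sup>*\<close>
  (peel off one rank-one term per diagonal entry, as in a Cholesky factorisation).
  For a symmetric tensor this turns \<open>\<langle>X, \<A>X\<rangle>\<close> into \<open>T = \<Sum>\<^sub>r\<^sub>,\<^sub>s \<A>(v\<^sub>r, v\<^sub>s, v\<^sub>r, v\<^sub>s)\<close>.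
  Averaging the quartic form \<open>f\<close> at \<open>\<Sum>\<^sub>r \<i>\<^bsup>\<epsilon>\<^sub>r\<^esup> v\<^sub>r\<close> over all phase vectors
  \<open>\<epsilon> \<in> {0,1,2,3}\<^sup>m\<close> kills every monomial whose phases do not cancel, and what survives is
  \<open>2 T - \<Sum>\<^sub>r f(v\<^sub>r)\<close>. Hence \<open>2 T\<close> is a nonnegative combination of values of \<open>f\<close>.
  Conversely, \<open>X = x x\<^sup>*\<close> gives back \<open>f(x)\<close>.\<close>

definition quad_form :: "nat \<Rightarrow> (nat \<Rightarrow> nat \<Rightarrow> complex) \<Rightarrow> (nat \<Rightarrow> complex) \<Rightarrow> complex" where
  "quad_form n X v = (\<Sum>i<n. \<Sum>j<n. cnj (v i) * X i j * v j)"

lemmas mult_if_distrib = if_distrib[where f = "\<lambda>x. x * c" for c] if_distrib[where f = "\<lambda>x. c * x" for c]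

lemma sum_if_zero_const_cond: "(\<Sum>x\<in>A. if P then f x else 0) = (if P then sum f A else 0)"
  by simp

lemma quad_form_unit:
  "k < n \<Longrightarrow> quad_form n X (\<lambda>i. if i = k then 1 else 0) = X k k"
  by (simp add: quad_form_def if_distrib[of cnj] mult_if_distrib cong: if_cong)

lemma quad_form_add_unit:
  assumes "p < n"
  shows "quad_form n X (\<lambda>i. v i + (if i = p then t else 0)) =
    quad_form n X v + cnj t * (\<Sum>j<n. X p j * v j) + (\<Sum>i<n. cnj (v i) * X i p) * t + cnj t * X p p * t"
  using assms
  by (simp add: quad_form_def algebra_simps sum.distrib if_distrib[of cnj] mult_if_distrib
      sum_distrib_left sum_distrib_right sum_if_zero_const_cond cong: if_cong)

lemma hermitian_psd_iff:
  "hermitian_psd n X \<longleftrightarrow> (\<forall>i<n. \<forall>j<n. X i j = cnj (X j i)) \<and> (\<forall>v. quad_form n X v \<ge> 0)"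
  unfolding hermitian_psd_def quad_form_def ..

lemma
  assumes "hermitian_psd n X"
  shows hermitian_psd_hermitian: "i < n \<Longrightarrow> j < n \<Longrightarrow> X i j = cnj (X j i)"
    and hermitian_psd_quad_form_nonneg: "quad_form n X v \<ge> 0"
  using assms unfolding hermitian_psd_iff by blast+

lemma hermitian_psd_diag_zero:
  assumes psd: "hermitian_psd n X" and "p < n" "k < n" and zero: "X p p = 0"
  shows "X p k = 0"
proof (rule ccontr)
  assume "X p k \<noteq> 0"
  define c where "c = X k p"
  have Xpk: "X p k = cnj c"
    unfolding c_def by (rule hermitian_psd_hermitian[OF psd \<open>p < n\<close> \<open>k < n\<close>])
  define N where "N = (cmod c)\<^sup>2"
  have "N > 0" using \<open>X p k \<noteq> 0\<close> Xpk by (simp add: N_def)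
  define r where "r = (\<bar>Re (X k k)\<bar> + 1) / (2 * N)"
  define t where "t = - of_real r * cnj c"
  have "quad_form n X (\<lambda>i. (if i = k then 1 else 0) + (if i = p then t else 0))
      = X k k + cnj t * X p k + X k p * t"
    using quad_form_add_unit[OF \<open>p < n\<close>, of X "\<lambda>i. if i = k then 1 else 0" t]
    by (simp add: quad_form_unit \<open>k < n\<close> zero if_distrib[of cnj] mult_if_distrib cong: if_cong)
  also have "\<dots> = X k k - 2 * of_real r * (c * cnj c)"
    by (simp add: t_def Xpk flip: c_def)
  also have "\<dots> = X k k - of_real (\<bar>Re (X k k)\<bar> + 1)"
    using \<open>N > 0\<close> by (simp add: r_def N_def field_simps flip: complex_norm_square)
  finally have "0 \<le> X k k - of_real (\<bar>Re (X k k)\<bar> + 1)"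
    by (metis hermitian_psd_quad_form_nonneg[OF psd])
  then show False by (simp add: less_eq_complex_def) linarith
qed

lemma hermitian_psd_subtract_rank_one:
  assumes psd: "hermitian_psd n X" and "p < n" and nz: "X p p \<noteq> 0"
  defines "w \<equiv> \<lambda>k. X k p / of_real (sqrt (Re (X p p)))"
  shows "hermitian_psd n (\<lambda>k l. X k l - w k * cnj (w l))"
    and "i < n \<Longrightarrow> X i p = w i * cnj (w p)"
    and "j < n \<Longrightarrow> X p j = w p * cnj (w j)"
proof -
  have herm: "\<And>i j. i < n \<Longrightarrow> j < n \<Longrightarrow> X i j = cnj (X j i)"
    using hermitian_psd_hermitian[OF psd] .
  have "0 \<le> X p p"
    using hermitian_psd_quad_form_nonneg[OF psd] quad_form_unit[OF \<open>p < n\<close>] by metis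
  define s where "s = sqrt (Re (X p p))"
  have "Re (X p p) > 0" and real: "X p p = of_real (Re (X p p))"
    using \<open>0 \<le> X p p\<close> nz by (auto simp: less_eq_complex_def complex_eq_iff)
  then have norm_w: "of_real s * of_real s = X p p" and cnj_Xpp: "cnj (X p p) = X p p"
    unfolding s_def by (simp_all flip: of_real_mult) (metis complex_cnj_complex_of_real)
  have w: "w = (\<lambda>k. X k p / of_real s)"
    unfolding w_def s_def ..
  show column: "X i p = w i * cnj (w p)" if "i < n" for i
  proof -
    have "w i * cnj (w p) = X i p * cnj (X p p) / (of_real s * of_real s)"
      by (simp add: w)
    then show ?thesis
      using nz by (simp add: cnj_Xpp norm_w)
  qed
  show "X p j = w p * cnj (w j)" if "j < n" for j
    using herm[OF \<open>p < n\<close> that] column[OF that] by simp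
  show "hermitian_psd n (\<lambda>k l. X k l - w k * cnj (w l))"
    unfolding hermitian_psd_iff
  proof (intro conjI allI impI)
    show "X i j - w i * cnj (w j) = cnj (X j i - w j * cnj (w i))" if "i < n" "j < n" for i j
      using herm[OF that] by simp
  next
    fix v
    have cnj_column: "cnj (X j p) = X p j" if "j < n" for j
      using herm[OF \<open>p < n\<close> that] by simp
    define \<sigma> where "\<sigma> = (\<Sum>j<n. X p j * v j)"
    have "quad_form n (\<lambda>k l. X k l - w k * cnj (w l)) v
        = quad_form n X v - (\<Sum>i<n. cnj (v i) * w i) * (\<Sum>j<n. cnj (w j) * v j)"
      unfolding quad_form_def sum_product
      by (simp add: right_diff_distrib left_diff_distrib sum_subtractf mult.assoc)
    also have "(\<Sum>j<n. cnj (w j) * v j) = \<sigma> / of_real s"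
      unfolding \<sigma>_def w sum_divide_distrib
      by (intro sum.cong refl) (simp add: cnj_column)
    also have "(\<Sum>i<n. cnj (v i) * w i) = cnj \<sigma> / of_real s"
      unfolding \<sigma>_def w sum_divide_distrib cnj_sum
      by (intro sum.cong refl) (simp add: cnj_column[symmetric] mult.commute)
    \<comment> \<open>Schur complement: the form of the deflated matrix is that of \<open>X\<close> at a shifted vector.\<close>
    also have "quad_form n X v - cnj \<sigma> / of_real s * (\<sigma> / of_real s)
        = quad_form n X (\<lambda>i. v i + (if i = p then - \<sigma> / X p p else 0))"
    proof -
      have "(\<Sum>i<n. cnj (v i) * X i p) = cnj \<sigma>"
        unfolding \<sigma>_def cnj_sum by (intro sum.cong refl) (simp add: cnj_column[symmetric] mult.commute)
      with nz show ?thesis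
        unfolding quad_form_add_unit[OF \<open>p < n\<close>] \<sigma>_def[symmetric]
        by (simp add: cnj_Xpp field_simps flip: norm_w)
    qed
    finally show "quad_form n (\<lambda>k l. X k l - w k * cnj (w l)) v \<ge> 0"
      by (metis hermitian_psd_quad_form_nonneg[OF psd])
  qed
qed

lemma hermitian_psd_gram_from:
  assumes "hermitian_psd n X" and "p \<le> n"
    and "\<forall>i<n. \<forall>j<n. i < p \<or> j < p \<longrightarrow> X i j = 0"
  shows "\<exists>(m::nat) V. \<forall>k<n. \<forall>l<n. X k l = (\<Sum>r<m. V r k * cnj (V r l))"
  using assms
proof (induction "n - p" arbitrary: p X)
  case 0
  then have "\<forall>k<n. \<forall>l<n. X k l = (\<Sum>r<(0::nat). V r k * cnj (V r l))" for V
    by simp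
  then show ?case by blast
next
  case (Suc d)
  then have "p < n" and d: "d = n - Suc p" and "Suc p \<le> n" by auto
  show ?case
  proof (cases "X p p = 0")
    case True
    have row: "X p j = 0" if "j < n" for j
      using hermitian_psd_diag_zero[OF Suc.prems(1) \<open>p < n\<close> that True] .
    have col: "X i p = 0" if "i < n" for i
      using hermitian_psd_hermitian[OF Suc.prems(1) that \<open>p < n\<close>] row[OF that] by simp
    have "X i j = 0" if "i < n" "j < n" "i < Suc p \<or> j < Suc p" for i j
      using that Suc.prems(3) row col by (auto simp: less_Suc_eq)
    then show ?thesis
      using Suc.hyps(1)[OF d Suc.prems(1) \<open>Suc p \<le> n\<close>] by blast
  next
    case False
    define w where "w k = X k p / of_real (sqrt (Re (X p p)))" for k
    note deflate = hermitian_psd_subtract_rank_one[OF Suc.prems(1) \<open>p < n\<close> False, folded w_def]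
    have "w i = 0" if "i < p" for i
      using that Suc.prems(3) \<open>p < n\<close> by (simp add: w_def)
    then have "\<forall>i<n. \<forall>j<n. i < Suc p \<or> j < Suc p \<longrightarrow> X i j - w i * cnj (w j) = 0"
      using Suc.prems(3) deflate(2,3) by (auto simp: less_Suc_eq)
    from Suc.hyps(1)[OF d deflate(1) \<open>Suc p \<le> n\<close> this]
    obtain m :: nat and V where V: "\<forall>k<n. \<forall>l<n. X k l - w k * cnj (w l) = (\<Sum>r<m. V r k * cnj (V r l))"
      by auto
    have "(\<Sum>r<Suc m. (V(m := w)) r k * cnj ((V(m := w)) r l)) = (\<Sum>r<m. V r k * cnj (V r l)) + w k * cnj (w l)"
      for k l by (simp add: sum.lessThan_Suc)
    then have "\<forall>k<n. \<forall>l<n. X k l = (\<Sum>r<Suc m. (V(m := w)) r k * cnj ((V(m := w)) r l))"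
      using V by (simp add: algebra_simps)
    then show ?thesis by blast
  qed
qed

lemma hermitian_psd_gram:
  assumes "hermitian_psd n X"
  shows "\<exists>(m::nat) V. \<forall>k<n. \<forall>l<n. X k l = (\<Sum>r<m. V r k * cnj (V r l))"
  using hermitian_psd_gram_from[OF assms, of 0] by simp

definition tensor_multilinear_form ::
    "nat \<Rightarrow> (nat \<Rightarrow> nat \<Rightarrow> nat \<Rightarrow> nat \<Rightarrow> complex) \<Rightarrow> (nat \<Rightarrow> complex) \<Rightarrow> (nat \<Rightarrow> complex) \<Rightarrow>
      (nat \<Rightarrow> complex) \<Rightarrow> (nat \<Rightarrow> complex) \<Rightarrow> complex" where
  "tensor_multilinear_form n A a b c d =
    (\<Sum>i<n. \<Sum>j<n. \<Sum>k<n. \<Sum>l<n. A i j k l * a i * b j * cnj (c k) * cnj (d l))"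

lemma tensor_form_eq_multilinear_form: "tensor_form n A x = tensor_multilinear_form n A x x x x"
  unfolding tensor_form_def tensor_multilinear_form_def ..

lemma sum_swap_nested4:
  "(\<Sum>r\<in>R. \<Sum>i<n. \<Sum>j<n. \<Sum>k<n. \<Sum>l<n. H r i j k l) =
   (\<Sum>i<n. \<Sum>j<n. \<Sum>k<n. \<Sum>l<n. \<Sum>r\<in>R. H r i j k l)"
  by (simp add: sum.swap[where A = R])

lemma tensor_multilinear_form_sum_expand:
  "tensor_multilinear_form n A (\<lambda>i. \<Sum>a\<in>R. \<alpha> a * u a i) (\<lambda>i. \<Sum>b\<in>R. \<alpha> b * u b i)
      (\<lambda>i. \<Sum>c\<in>R. \<alpha> c * u c i) (\<lambda>i. \<Sum>d\<in>R. \<alpha> d * u d i)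
   = (\<Sum>a\<in>R. \<Sum>b\<in>R. \<Sum>c\<in>R. \<Sum>d\<in>R.
        \<alpha> a * \<alpha> b * cnj (\<alpha> c) * cnj (\<alpha> d) * tensor_multilinear_form n A (u a) (u b) (u c) (u d))"
  unfolding tensor_multilinear_form_def
  by (simp add: sum_distrib_left sum_distrib_right sum_swap_nested4 mult_ac)

lemma tensor_multilinear_form_swap_conj_args:
  assumes "symmetric_tensor n A"
  shows "tensor_multilinear_form n A a b c d = tensor_multilinear_form n A a b d c"
proof -
  have "tensor_multilinear_form n A a b d c
      = (\<Sum>i<n. \<Sum>j<n. \<Sum>k<n. \<Sum>l<n. A i j l k * a i * b j * cnj (d l) * cnj (c k))"
    unfolding tensor_multilinear_form_def
    by (rule sum.cong[OF refl], rule sum.cong[OF refl], rule sum.swap)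
  also have "\<dots> = tensor_multilinear_form n A a b c d"
    unfolding tensor_multilinear_form_def
  proof (intro sum.cong refl)
    fix i j k l assume "i \<in> {..<n}" "j \<in> {..<n}" "k \<in> {..<n}" "l \<in> {..<n}"
    with assms have "A i j l k = A i j k l"
      unfolding symmetric_tensor_def by simp
    then show "A i j l k * a i * b j * cnj (d l) * cnj (c k) = A i j k l * a i * b j * cnj (c k) * cnj (d l)"
      by (simp add: mult_ac)
  qed
  finally show ?thesis ..
qed

lemma symmetric_tensor_rotate:
  assumes "symmetric_tensor n A" and "i < n" "j < n" "k < n" "l < n"
  shows "A i j k l = A j k i l"
proof -
  have "A i j k l = A j i k l" and "A j i k l = A j k i l"
    using assms unfolding symmetric_tensor_def by blast+
  then show ?thesis by simp
qed

lemma tensor_matrix_inner_gram: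
  fixes m :: nat
  assumes sym: "symmetric_tensor n A"
    and gram: "\<forall>k<n. \<forall>l<n. X k l = (\<Sum>r<m. V r k * cnj (V r l))"
  shows "tensor_matrix_inner n X A = (\<Sum>r<m. \<Sum>s<m. tensor_multilinear_form n A (V r) (V s) (V r) (V s))"
proof -
  have "tensor_matrix_inner n X A = (\<Sum>i<n. \<Sum>j<n. \<Sum>k<n. \<Sum>l<n.
          \<Sum>r<m. \<Sum>s<m. A i j k l * V s j * V r k * cnj (V s i) * cnj (V r l))"
    unfolding tensor_matrix_inner_def using gram
    by (intro sum.cong refl) (simp add: sum_distrib_left sum_distrib_right mult_ac)
  also have "\<dots> = (\<Sum>r<m. \<Sum>s<m. \<Sum>i<n. \<Sum>j<n. \<Sum>k<n. \<Sum>l<n.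
          A i j k l * V s j * V r k * cnj (V s i) * cnj (V r l))"
    by (subst sum_swap_nested4[symmetric]) (rule sum.cong[OF refl], rule sum_swap_nested4[symmetric])
  also have "\<dots> = (\<Sum>r<m. \<Sum>s<m. \<Sum>i<n. \<Sum>j<n. \<Sum>k<n. \<Sum>l<n.
          A j k i l * V s j * V r k * cnj (V s i) * cnj (V r l))"
    by (intro sum.cong refl) (subst symmetric_tensor_rotate[OF sym], auto)
  also have "\<dots> = (\<Sum>r<m. \<Sum>s<m. tensor_multilinear_form n A (V s) (V r) (V s) (V r))"
    unfolding tensor_multilinear_form_def
    by (rule sum.cong[OF refl], rule sum.cong[OF refl], subst sum.swap) (rule sum.cong[OF refl], rule sum.swap)
  also have "\<dots> = (\<Sum>r<m. \<Sum>s<m. tensor_multilinear_form n A (V r) (V s) (V r) (V s))"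
    by (rule sum.swap)
  finally show ?thesis .
qed

lemma cnj_imaginary_unit_power: "cnj (\<i> ^ e) = \<i> ^ (3 * e)"
proof -
  have "\<i> ^ (3 * e) = (\<i> ^ 3) ^ e" by (simp add: power_mult)
  also have "\<i> ^ 3 = - \<i>" by (simp add: numeral_3_eq_3)
  finally show ?thesis by simp
qed

lemma sum_imaginary_unit_powers: "(\<Sum>e<4::nat. \<i> ^ (e * c)) = (if 4 dvd c then 4 else 0)"
proof -
  obtain q r where c: "c = 4 * q + r" and "r < 4"
    by (metis mod_less_divisor div_mult_mod_eq mult.commute zero_less_numeral)
  have "\<i> ^ (e * c) = \<i> ^ (e * r)" for e
  proof -
    have "\<i> ^ (e * c) = (\<i> ^ 4) ^ (e * q) * \<i> ^ (e * r)"
      unfolding c by (simp add: algebra_simps power_add power_mult[symmetric])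
    also have "\<i> ^ 4 = (1::complex)"
      by (simp add: power_mult[symmetric, of _ 2 2, simplified])
    finally show ?thesis by simp
  qed
  moreover have "4 dvd c \<longleftrightarrow> r = 0"
    unfolding c using \<open>r < 4\<close> by presburger
  moreover have "{..<4::nat} = {0, 1, 2, 3}" by auto
  moreover have "r = 0 \<or> r = 1 \<or> r = 2 \<or> r = 3"
    using \<open>r < 4\<close> by auto
  ultimately show ?thesis
    by (elim disjE) (simp_all add: power_mult[symmetric] numeral_3_eq_3 eval_nat_numeral)
qed

definition same_pair :: "nat \<Rightarrow> nat \<Rightarrow> nat \<Rightarrow> nat \<Rightarrow> bool" where
  "same_pair a b c d \<longleftrightarrow> (c = a \<and> d = b) \<or> (c = b \<and> d = a)"

text \<open>Since \<open>cnj \<i> = \<i>\<^sup>3\<close>, coordinate \<open>r\<close> contributes \<open>\<i>\<^bsup>\<epsilon> r * phase_exponent a b c d r\<^esup>\<close>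
  to the phase \<open>\<i>\<^bsup>\<epsilon> a\<^esup> \<i>\<^bsup>\<epsilon> b\<^esup> cnj (\<i>\<^bsup>\<epsilon> c\<^esup>) cnj (\<i>\<^bsup>\<epsilon> d\<^esup>)\<close>.\<close>

definition phase_exponent :: "nat \<Rightarrow> nat \<Rightarrow> nat \<Rightarrow> nat \<Rightarrow> nat \<Rightarrow> nat" where
  "phase_exponent a b c d r = of_bool (r = a) + of_bool (r = b) + 3 * of_bool (r = c) + 3 * of_bool (r = d)"

lemma phase_exponent_dvd_iff:
  "(\<forall>r\<in>{a, b, c, d}. 4 dvd phase_exponent a b c d r) \<longleftrightarrow> same_pair a b c d"
  unfolding same_pair_def phase_exponent_def
  by (cases "a = b"; cases "a = c"; cases "a = d"; cases "b = c"; cases "b = d"; cases "c = d") auto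

lemma phase_monomial_eq_prod:
  assumes "a < m" "b < m" "c < m" "d < m"
  shows "\<i> ^ \<epsilon> a * \<i> ^ \<epsilon> b * cnj (\<i> ^ \<epsilon> c) * cnj (\<i> ^ \<epsilon> d)
    = (\<Prod>r<m. \<i> ^ (\<epsilon> r * phase_exponent a b c d r))"
proof -
  have "\<epsilon> r * phase_exponent a b c d r = (if r = a then \<epsilon> r else 0) + (if r = b then \<epsilon> r else 0)
      + 3 * (if r = c then \<epsilon> r else 0) + 3 * (if r = d then \<epsilon> r else 0)" for r
    by (simp add: phase_exponent_def algebra_simps)
  then have "(\<Sum>r<m. \<epsilon> r * phase_exponent a b c d r) = \<epsilon> a + \<epsilon> b + 3 * \<epsilon> c + 3 * \<epsilon> d"
    using assms by (simp add: sum.distrib flip: sum_distrib_left)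
  then show ?thesis
    unfolding cnj_imaginary_unit_power power_add[symmetric] power_sum[symmetric] by simp
qed

lemma sum_phase_monomial:
  assumes "a < m" "b < m" "c < m" "d < m"
  shows "(\<Sum>\<epsilon>\<in>PiE {..<m} (\<lambda>_. {..<4::nat}). \<i> ^ \<epsilon> a * \<i> ^ \<epsilon> b * cnj (\<i> ^ \<epsilon> c) * cnj (\<i> ^ \<epsilon> d))
    = 4 ^ m * of_bool (same_pair a b c d)"
proof -
  have "(\<Sum>\<epsilon>\<in>PiE {..<m} (\<lambda>_. {..<4::nat}). \<i> ^ \<epsilon> a * \<i> ^ \<epsilon> b * cnj (\<i> ^ \<epsilon> c) * cnj (\<i> ^ \<epsilon> d))
      = (\<Prod>r<m. \<Sum>e<4::nat. \<i> ^ (e * phase_exponent a b c d r))"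
    unfolding phase_monomial_eq_prod[OF assms] by (rule prod_sum_PiE[symmetric]) simp_all
  also have "\<dots> = (\<Prod>r<m. if 4 dvd phase_exponent a b c d r then 4 else 0)"
    by (simp add: sum_imaginary_unit_powers)
  also have "\<dots> = 4 ^ m * of_bool (same_pair a b c d)"
  proof (cases "same_pair a b c d")
    case True
    then have "4 dvd phase_exponent a b c d r" for r
      unfolding same_pair_def phase_exponent_def by auto
    then show ?thesis using True by simp
  next
    case False
    then obtain r where "r \<in> {a, b, c, d}" "\<not> 4 dvd phase_exponent a b c d r"
      using phase_exponent_dvd_iff by blast
    with assms have "(\<Prod>r<m. if 4 dvd phase_exponent a b c d r then 4 else 0) = (0::complex)"
      by (intro prod_zero) auto
    with False show ?thesis by simp
  qed
  finally show ?thesis .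
qed

lemma sum_same_pair:
  fixes g :: "nat \<Rightarrow> nat \<Rightarrow> nat \<Rightarrow> nat \<Rightarrow> 'a :: comm_ring_1"
  shows "(\<Sum>a<m. \<Sum>b<m. \<Sum>c<m. \<Sum>d<m. of_bool (same_pair a b c d) * g a b c d)
    = (\<Sum>a<m. \<Sum>b<m. g a b a b) + (\<Sum>a<m. \<Sum>b<m. g a b b a) - (\<Sum>a<m. g a a a a)"
proof -
  have "of_bool (same_pair a b c d) * g a b c d
      = (if c = a then if d = b then g a b c d else 0 else 0)
        + (if c = b then if d = a then g a b c d else 0 else 0)
        - (if b = a then if c = a then if d = a then g a b c d else 0 else 0 else 0)" for a b c d
    unfolding same_pair_def by auto
  then show ?thesis
    by (simp add: sum.distrib sum_subtractf sum_if_zero_const_cond)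
qed

lemma tensor_form_phase_sum:
  fixes m :: nat
  assumes sym: "symmetric_tensor n A"
  shows "(\<Sum>\<epsilon>\<in>PiE {..<m} (\<lambda>_. {..<4::nat}). tensor_form n A (\<lambda>i. \<Sum>r<m. \<i> ^ \<epsilon> r * V r i))
    = 4 ^ m * (2 * (\<Sum>a<m. \<Sum>b<m. tensor_multilinear_form n A (V a) (V b) (V a) (V b))
               - (\<Sum>a<m. tensor_form n A (V a)))"
proof -
  let ?M = "\<lambda>a b c d. tensor_multilinear_form n A (V a) (V b) (V c) (V d)"
  let ?phase = "\<lambda>\<epsilon> a b c d. \<i> ^ \<epsilon> a * \<i> ^ \<epsilon> b * cnj (\<i> ^ \<epsilon> c) * cnj (\<i> ^ \<epsilon> d)"
  have "(\<Sum>\<epsilon>\<in>PiE {..<m} (\<lambda>_. {..<4::nat}). tensor_form n A (\<lambda>i. \<Sum>r<m. \<i> ^ \<epsilon> r * V r i))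
      = (\<Sum>\<epsilon>\<in>PiE {..<m} (\<lambda>_. {..<4::nat}). \<Sum>a<m. \<Sum>b<m. \<Sum>c<m. \<Sum>d<m. ?phase \<epsilon> a b c d * ?M a b c d)"
    by (simp only: tensor_form_eq_multilinear_form tensor_multilinear_form_sum_expand)
  also have "\<dots> = (\<Sum>a<m. \<Sum>b<m. \<Sum>c<m. \<Sum>d<m.
      (\<Sum>\<epsilon>\<in>PiE {..<m} (\<lambda>_. {..<4::nat}). ?phase \<epsilon> a b c d) * ?M a b c d)"
    by (simp only: sum_swap_nested4 sum_distrib_right)
  also have "\<dots> = (\<Sum>a<m. \<Sum>b<m. \<Sum>c<m. \<Sum>d<m. 4 ^ m * (of_bool (same_pair a b c d) * ?M a b c d))"
    by (intro sum.cong refl) (subst sum_phase_monomial, auto)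
  also have "\<dots> = 4 ^ m * (\<Sum>a<m. \<Sum>b<m. \<Sum>c<m. \<Sum>d<m. of_bool (same_pair a b c d) * ?M a b c d)"
    by (simp only: sum_distrib_left)
  also have "\<dots> = 4 ^ m * ((\<Sum>a<m. \<Sum>b<m. ?M a b a b) + (\<Sum>a<m. \<Sum>b<m. ?M a b b a) - (\<Sum>a<m. ?M a a a a))"
    by (simp only: sum_same_pair)
  also have "(\<Sum>a<m. \<Sum>b<m. ?M a b b a) = (\<Sum>a<m. \<Sum>b<m. ?M a b a b)"
    by (intro sum.cong refl) (rule tensor_multilinear_form_swap_conj_args[OF sym])
  also have "(\<Sum>a<m. ?M a a a a) = (\<Sum>a<m. tensor_form n A (V a))"
    by (simp only: tensor_form_eq_multilinear_form)
  finally show ?thesis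
    by (simp only: mult_2)
qed

lemma tensor_matrix_inner_gram_phase_sum:
  fixes m :: nat
  assumes sym: "symmetric_tensor n A"
    and gram: "\<forall>k<n. \<forall>l<n. X k l = (\<Sum>r<m. V r k * cnj (V r l))"
  shows "(2 * 4 ^ m) *\<^sub>R tensor_matrix_inner n X A
    = (\<Sum>\<epsilon>\<in>PiE {..<m} (\<lambda>_. {..<4::nat}). tensor_form n A (\<lambda>i. \<Sum>r<m. \<i> ^ \<epsilon> r * V r i))
      + 4 ^ m *\<^sub>R (\<Sum>r<m. tensor_form n A (V r))"
  unfolding tensor_form_phase_sum[OF sym] tensor_matrix_inner_gram[OF sym gram]
  by (simp add: scaleR_conv_of_real algebra_simps)

lemma hermitian_psd_rank_one: "hermitian_psd n (\<lambda>k l. x k * cnj (x l))"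
  unfolding hermitian_psd_iff
proof (intro conjI allI impI)
  fix v
  define s where "s = (\<Sum>i<n. cnj (v i) * x i)"
  have "quad_form n (\<lambda>k l. x k * cnj (x l)) v = s * cnj s"
    unfolding quad_form_def s_def cnj_sum sum_product by (simp add: mult_ac)
  also have "\<dots> = of_real ((cmod s)\<^sup>2)"
    by (rule complex_norm_square[symmetric])
  finally show "quad_form n (\<lambda>k l. x k * cnj (x l)) v \<ge> 0"
    by (simp add: less_eq_complex_def)
qed simp

theorem theorem5p6:
  fixes n :: nat and A :: "nat \<Rightarrow> nat \<Rightarrow> nat \<Rightarrow> nat \<Rightarrow> complex"
  assumes "CPS_tensor n A" and "symmetric_tensor n A"
  shows "(\<forall>x :: nat \<Rightarrow> complex. tensor_form n A x \<ge> 0) \<longleftrightarrow>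
         (\<forall>X :: nat \<Rightarrow> nat \<Rightarrow> complex. hermitian_psd n X \<longrightarrow> tensor_matrix_inner n X A \<ge> 0)"
proof (intro iffI allI impI)
  fix X :: "nat \<Rightarrow> nat \<Rightarrow> complex"
  assume form_nonneg: "\<forall>x. tensor_form n A x \<ge> 0" and "hermitian_psd n X"
  then obtain m :: nat and V where gram: "\<forall>k<n. \<forall>l<n. X k l = (\<Sum>r<m. V r k * cnj (V r l))"
    using hermitian_psd_gram by blast
  have "0 \<le> (2 * 4 ^ m) *\<^sub>R tensor_matrix_inner n X A"
    unfolding tensor_matrix_inner_gram_phase_sum[OF assms(2) gram]
    using form_nonneg by (intro add_nonneg_nonneg sum_nonneg scaleR_nonneg_nonneg) auto
  then show "tensor_matrix_inner n X A \<ge> 0"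
    by (simp add: zero_le_scaleR_iff)
next
  fix x :: "nat \<Rightarrow> complex"
  assume "\<forall>X. hermitian_psd n X \<longrightarrow> tensor_matrix_inner n X A \<ge> 0"
  then have "tensor_matrix_inner n (\<lambda>k l. x k * cnj (x l)) A \<ge> 0"
    using hermitian_psd_rank_one by blast
  also have "tensor_matrix_inner n (\<lambda>k l. x k * cnj (x l)) A = tensor_form n A x"
    using tensor_matrix_inner_gram[OF assms(2), where X = "\<lambda>k l. x k * cnj (x l)" and m = 1 and V = "\<lambda>_. x"]
    by (simp add: tensor_form_eq_multilinear_form)
  finally show "tensor_form n A x \<ge> 0" .
qed

end
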